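(* Let $A\in\mathbb{R}^{m\times n}$ have no zero row, with rows $a_1^T,\dots,a_m^T$, let $b\in\mathbb{R}^m$ with $Ax=b$ consistent, and let $x^\dagger$ be the minimum-norm least-squares solution. Let $0<\mu_i<2$ for $1\le i\le m$, ${\bf u}=(\mu_1,\dots,\mu_m)$, $\Lambda=\mathrm{diag}(\mu_1,\dots,\mu_m)$, $M=\mathrm{diag}(1/\|a_1\|_2^2,\dots,1/\|a_m\|_2^2)$, and let $C({\bf u})\in\mathbb{R}^{m\times m}$ be a unit upper triangular matrix with $A_{\mathcal S}({\bf u})=C({\bf u})A$, where $A_{\mathcal S}({\bf u})=(Q_1({\bf u}_1)a_1,\dots,Q_m({\bf u}_m)a_m)^T$, $Q_j({\bf u}_j)=P_m(\mu_m)\cdots P_{j+1}(\mu_{j+1})$ for $j<m$, $Q_m({\bf u}_m)=I$, $P_k(\mu_k)=I-\mu_ka_ka_k^T/\|a_k\|_2^2$. Let $y_0\in\mathbb{R}^n$ and $$y_k=y_{k-1}+A^T[C({\bf u})]^T\Lambda M(b-Ay_{k-1}),\qquad k=1,2,\dots.$$ Then $y_k\to x^\dagger+P_{N(A)}y_0$ as $k\to\infty$.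
   Context: $P_{N(A)}$ is the orthogonal projection onto the null space of $A$. Such a matrix $C({\bf u})$ always exists. *)

theory Defs
  imports Complex_Main "Jordan_Normal_Form.Matrix"
begin

text \<open>Matrices are Jordan_Normal_Form matrices; rows/entries are 0-indexed,
  so the paper's row a_i (1 \<le> i \<le> m) is row A (i-1).\<close>

definition sqnorm :: "real vec \<Rightarrow> real" where
  "sqnorm v = v \<bullet> v"

definition is_ls_sol :: "real mat \<Rightarrow> real vec \<Rightarrow> real vec \<Rightarrow> bool" where
  "is_ls_sol A b x \<longleftrightarrow> x \<in> carrier_vec (dim_col A) \<and>
     (\<forall>z \<in> carrier_vec (dim_col A). sqnorm (A *\<^sub>v x - b) \<le> sqnorm (A *\<^sub>v z - b))"

definition mnls :: "real mat \<Rightarrow> real vec \<Rightarrow> real vec" where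
  "mnls A b = (THE x. is_ls_sol A b x \<and> (\<forall>z. is_ls_sol A b z \<longrightarrow> sqnorm x \<le> sqnorm z))"

definition proj_null :: "real mat \<Rightarrow> real vec \<Rightarrow> real vec" where
  "proj_null A y = (THE p. p \<in> carrier_vec (dim_col A) \<and> A *\<^sub>v p = 0\<^sub>v (dim_row A) \<and>
     (\<forall>z \<in> carrier_vec (dim_col A). A *\<^sub>v z = 0\<^sub>v (dim_row A) \<longrightarrow> (y - p) \<bullet> z = 0))"

definition Pk :: "real mat \<Rightarrow> (nat \<Rightarrow> real) \<Rightarrow> nat \<Rightarrow> real mat" where
  "Pk A mu k = 1\<^sub>m (dim_col A) -
     (mu k / sqnorm (row A k)) \<cdot>\<^sub>m
       mat (dim_col A) (dim_col A) (\<lambda>(i,j). row A k $ i * row A k $ j)"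

text \<open>Q_j(u_j) = P_m(mu_m) ... P_{j+1}(mu_{j+1}) (0-indexed: P_{m-1} ... P_{j+1}),
  and Q for the last row is the identity\<close>
definition Qj :: "real mat \<Rightarrow> (nat \<Rightarrow> real) \<Rightarrow> nat \<Rightarrow> real mat" where
  "Qj A mu j = foldl (\<lambda>acc k. Pk A mu k * acc) (1\<^sub>m (dim_col A)) [Suc j..<dim_row A]"

definition AS :: "real mat \<Rightarrow> (nat \<Rightarrow> real) \<Rightarrow> real mat" where
  "AS A mu = mat (dim_row A) (dim_col A) (\<lambda>(i,j). (Qj A mu i *\<^sub>v row A i) $ j)"

definition unit_upper_triangular :: "nat \<Rightarrow> real mat \<Rightarrow> bool" where
  "unit_upper_triangular m C \<longleftrightarrow> C \<in> carrier_mat m m \<and>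
     (\<forall>i<m. C $$ (i,i) = 1) \<and> (\<forall>i<m. \<forall>j<i. C $$ (i,j) = 0)"

end

(* Let S = P_m ... P_1 be one sweep of relaxed projections. Since A_S(u) = C(u) A, the matrix
   A^T C(u)^T Lambda M A applied to u telescopes to u - S u, so for any solution x of A x = b
   the errors y_k - x are the iterates S^k (y_0 - x).
   With 0 < mu_k < 2 each P_k fixes N(A), moves vectors only along a_k, which lies in N(A)^perp,
   and strictly decreases the norm unless a_k^T v = 0. Hence ||S^k v|| decreases; any limit point
   L of S^k v satisfies ||S L|| = ||L||, so L lies in N(A), while v - S^k v stays in N(A)^perp.
   Thus L = P_N(A) v, and since ||S^k v - L|| decreases too, the whole sequence converges to L.
   Finally x + P_N(A) (y_0 - x) = (x - P_N(A) x) + P_N(A) y_0, and x - P_N(A) x is the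
   minimum-norm solution. *)

theory Submission
  imports Defs "Jordan_Normal_Form.Matrix_Kernel"
begin

lemma scalar_prod_as_sum: "v \<bullet> w = (\<Sum>i<dim_vec w. v $ i * w $ i)"
  unfolding scalar_prod_def by (simp add: atLeast0LessThan)

lemma sqnorm_nonneg: "0 \<le> sqnorm (v :: real vec)"
  using conjugate_square_ge_0_vec[of v] by (simp add: sqnorm_def)

lemma sqnorm_eq_0_iff: "v \<in> carrier_vec n \<Longrightarrow> sqnorm v = 0 \<longleftrightarrow> v = 0\<^sub>v n"
  using conjugate_square_eq_0_vec[of v n] by (simp add: sqnorm_def)

lemma diff_eq_0_vec_iff:
  fixes u w :: "'a :: ab_group_add vec"
  shows "u \<in> carrier_vec n \<Longrightarrow> w \<in> carrier_vec n \<Longrightarrow> u - w = 0\<^sub>v n \<longleftrightarrow> u = w"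
proof
  assume u: "u \<in> carrier_vec n" and w: "w \<in> carrier_vec n" and diff: "u - w = 0\<^sub>v n"
  show "u = w"
  proof (rule eq_vecI)
    fix i assume i: "i < dim_vec w"
    then have "(u - w) $ i = 0" using diff w by simp
    then show "u $ i = w $ i" using i by simp
  qed (use u w in simp)
qed auto

lemma sq_vec_index_le_sqnorm:
  assumes "i < dim_vec (v :: real vec)"
  shows "(v $ i)\<^sup>2 \<le> sqnorm v"
proof -
  have "(v $ i)\<^sup>2 = (\<Sum>j\<in>{i}. v $ j * v $ j)" by (simp add: power2_eq_square)
  also have "\<dots> \<le> (\<Sum>j<dim_vec v. v $ j * v $ j)" using assms by (intro sum_mono2) auto
  finally show ?thesis unfolding sqnorm_def scalar_prod_as_sum .
qed

lemma abs_vec_index_le_sqrt_sqnorm: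
  "i < dim_vec (v :: real vec) \<Longrightarrow> \<bar>v $ i\<bar> \<le> sqrt (sqnorm v)"
  using real_sqrt_le_mono[OF sq_vec_index_le_sqnorm] by simp

lemma sqnorm_add:
  assumes "u \<in> carrier_vec n" and "w \<in> carrier_vec n"
  shows "sqnorm (u + w) = sqnorm u + 2 * (u \<bullet> w) + sqnorm (w :: real vec)"
proof -
  have "(\<Sum>i<n. (u $ i + w $ i) * (u $ i + w $ i))
      = (\<Sum>i<n. u $ i * u $ i) + 2 * (\<Sum>i<n. u $ i * w $ i) + (\<Sum>i<n. w $ i * w $ i)"
    by (simp add: algebra_simps sum.distrib sum_distrib_left)
  then show ?thesis using assms unfolding sqnorm_def scalar_prod_as_sum by simp
qed

lemma sqnorm_diff_smult:
  assumes "v \<in> carrier_vec n" and "a \<in> carrier_vec n"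
  shows "sqnorm (v - s \<cdot>\<^sub>v a) = sqnorm v - 2 * s * (a \<bullet> v) + s\<^sup>2 * sqnorm (a :: real vec)"
proof -
  have "(\<Sum>i<n. (v $ i - s * a $ i) * (v $ i - s * a $ i))
      = (\<Sum>i<n. v $ i * v $ i) - 2 * s * (\<Sum>i<n. a $ i * v $ i) + s\<^sup>2 * (\<Sum>i<n. a $ i * a $ i)"
    by (simp add: algebra_simps sum.distrib sum_subtractf sum_distrib_left power2_eq_square)
  then show ?thesis using assms unfolding sqnorm_def scalar_prod_as_sum by simp
qed

definition tendsto_vec :: "(nat \<Rightarrow> real vec) \<Rightarrow> real vec \<Rightarrow> bool" where
  "tendsto_vec x L \<longleftrightarrow> (\<forall>i<dim_vec L. (\<lambda>t. x t $ i) \<longlonglongrightarrow> L $ i)"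

lemma tendsto_vec_add:
  assumes "tendsto_vec x L" and "tendsto_vec y K" and "\<forall>t. y t \<in> carrier_vec n"
    and "L \<in> carrier_vec n" and "K \<in> carrier_vec n"
  shows "tendsto_vec (\<lambda>t. x t + y t) (L + K)"
  unfolding tendsto_vec_def
proof (intro allI impI)
  fix i assume "i < dim_vec (L + K)"
  then have i: "i < n" using assms by simp
  have "(\<lambda>t. x t $ i + y t $ i) \<longlonglongrightarrow> L $ i + K $ i"
    using assms i by (intro tendsto_add) (auto simp: tendsto_vec_def)
  moreover have "(x t + y t) $ i = x t $ i + y t $ i" for t
    using carrier_vecD[OF assms(3)[rule_format]] i by simp
  ultimately show "(\<lambda>t. (x t + y t) $ i) \<longlonglongrightarrow> (L + K) $ i"
    using assms(4,5) i by simp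
qed

lemma tendsto_vec_diff:
  assumes "tendsto_vec x L" and "tendsto_vec y K" and "\<forall>t. y t \<in> carrier_vec n"
    and "L \<in> carrier_vec n" and "K \<in> carrier_vec n"
  shows "tendsto_vec (\<lambda>t. x t - y t) (L - K)"
  unfolding tendsto_vec_def
proof (intro allI impI)
  fix i assume "i < dim_vec (L - K)"
  then have i: "i < n" using assms by simp
  have "(\<lambda>t. x t $ i - y t $ i) \<longlonglongrightarrow> L $ i - K $ i"
    using assms i by (intro tendsto_diff) (auto simp: tendsto_vec_def)
  moreover have "(x t - y t) $ i = x t $ i - y t $ i" for t
    using carrier_vecD[OF assms(3)[rule_format]] i by simp
  ultimately show "(\<lambda>t. (x t - y t) $ i) \<longlonglongrightarrow> (L - K) $ i"
    using assms(4,5) i by simp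
qed

lemma tendsto_vec_const: "tendsto_vec (\<lambda>t. v) v"
  unfolding tendsto_vec_def by simp

lemma tendsto_vec_mult_mat_vec:
  assumes M: "M \<in> carrier_mat k n" and x: "\<forall>t. x t \<in> carrier_vec n" and L: "L \<in> carrier_vec n"
    and lim: "tendsto_vec x L"
  shows "tendsto_vec (\<lambda>t. M *\<^sub>v x t) (M *\<^sub>v L)"
  unfolding tendsto_vec_def
proof (intro allI impI)
  fix i assume "i < dim_vec (M *\<^sub>v L)"
  then have i: "i < k" using M by simp
  have entry: "(M *\<^sub>v v) $ i = (\<Sum>j<n. row M i $ j * v $ j)" if "v \<in> carrier_vec n" for v
    using M i that by (simp add: scalar_prod_as_sum)
  show "(\<lambda>t. (M *\<^sub>v x t) $ i) \<longlonglongrightarrow> (M *\<^sub>v L) $ i"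
    unfolding entry[OF L] entry[OF x[rule_format]]
    by (intro tendsto_sum tendsto_mult_left) (use lim L in \<open>auto simp: tendsto_vec_def\<close>)
qed

lemma tendsto_scalar_prod:
  assumes "z \<in> carrier_vec n" "L \<in> carrier_vec n" "tendsto_vec x L"
  shows "(\<lambda>t. x t \<bullet> z) \<longlonglongrightarrow> L \<bullet> z"
  unfolding scalar_prod_as_sum using assms
  by (simp, intro tendsto_sum tendsto_mult_right) (auto simp: tendsto_vec_def)

lemma tendsto_sqnorm:
  assumes x: "\<forall>t. x t \<in> carrier_vec n" and L: "L \<in> carrier_vec n" and lim: "tendsto_vec x L"
  shows "(\<lambda>t. sqnorm (x t)) \<longlonglongrightarrow> sqnorm L"
proof -
  have sum: "sqnorm v = (\<Sum>j<n. v $ j * v $ j)" if "v \<in> carrier_vec n" for v :: "real vec"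
    using that unfolding sqnorm_def by (simp add: scalar_prod_as_sum)
  show ?thesis unfolding sum[OF L] sum[OF x[rule_format]]
    by (intro tendsto_sum tendsto_mult) (use lim L in \<open>auto simp: tendsto_vec_def\<close>)
qed

lemma tendsto_vec_if_sqnorm_diff_tendsto_0:
  assumes L: "L \<in> carrier_vec n" and lim: "(\<lambda>t. sqnorm (x t - L)) \<longlonglongrightarrow> 0"
  shows "tendsto_vec x L"
  unfolding tendsto_vec_def
proof (intro allI impI)
  fix i assume "i < dim_vec L"
  then have bound: "\<forall>t. norm (x t $ i - L $ i) \<le> norm (sqrt (sqnorm (x t - L))) * 1"
    using abs_vec_index_le_sqrt_sqnorm[of i "x t - L" for t] by (simp add: sqnorm_nonneg)
  have "(\<lambda>t. sqrt (sqnorm (x t - L))) \<longlonglongrightarrow> 0"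
    using tendsto_real_sqrt[OF lim] by simp
  then have "(\<lambda>t. x t $ i - L $ i) \<longlonglongrightarrow> 0"
    by (rule tendsto_0_le[OF _ always_eventually[OF bound]])
  then show "(\<lambda>t. x t $ i) \<longlonglongrightarrow> L $ i" by (rule LIM_zero_cancel)
qed

lemma bounded_vec_seq_has_convergent_subseq:
  fixes x :: "nat \<Rightarrow> real vec"
  assumes bound: "\<forall>t i. i < n \<longrightarrow> \<bar>x t $ i\<bar> \<le> B"
  shows "\<exists>r L. strict_mono r \<and> L \<in> carrier_vec n \<and> tendsto_vec (\<lambda>t. x (r t)) L"
proof -
  have "\<exists>r f. strict_mono r \<and> (\<forall>i<k. (\<lambda>t. x (r t) $ i) \<longlonglongrightarrow> f i)" if "k \<le> n" for k
    using that
  proof (induction k)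
    case 0
    show ?case using strict_mono_id by blast
  next
    case (Suc k)
    then obtain r f where r: "strict_mono r" and f: "\<forall>i<k. (\<lambda>t. x (r t) $ i) \<longlonglongrightarrow> f i"
      by auto
    obtain g where g: "strict_mono g" and mono: "monoseq (\<lambda>t. x (r (g t)) $ k)"
      using seq_monosub[of "\<lambda>t. x (r t) $ k"] by blast
    have "Bseq (\<lambda>t. x (r (g t)) $ k)" using bound Suc.prems by (intro BseqI'[where K = B]) auto
    then obtain l where l: "(\<lambda>t. x (r (g t)) $ k) \<longlonglongrightarrow> l"
      using Bseq_monoseq_convergent[OF _ mono] unfolding convergent_def by blast
    have "(\<lambda>t. x (r (g t)) $ i) \<longlonglongrightarrow> f i" if "i < k" for i
      using LIMSEQ_subseq_LIMSEQ[OF f[rule_format, OF that] g] by (simp add: o_def)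
    then have "\<forall>i<Suc k. (\<lambda>t. x (r (g t)) $ i) \<longlonglongrightarrow> (f(k := l)) i"
      using l less_Suc_eq by auto
    moreover have "strict_mono (\<lambda>t. r (g t))" using strict_mono_o[OF r g] by (simp add: o_def)
    ultimately show ?case by blast
  qed
  then obtain r f where "strict_mono r" "\<forall>i<n. (\<lambda>t. x (r t) $ i) \<longlonglongrightarrow> f i" by blast
  then show ?thesis by (intro exI[of _ r] exI[of _ "vec n f"]) (auto simp: tendsto_vec_def)
qed

lemma decseq_tendsto_if_subseq_tendsto:
  fixes f :: "nat \<Rightarrow> real"
  assumes dec: "decseq f" and r: "strict_mono r" and lim: "(\<lambda>t. f (r t)) \<longlonglongrightarrow> l"
  shows "f \<longlonglongrightarrow> l"
proof -
  have "l \<le> f t" for t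
  proof (rule LIMSEQ_le_const2[OF lim])
    have "f (r s) \<le> f t" if "t \<le> s" for s
      using decseqD[OF dec] seq_suble[OF r, of s] that by simp
    then show "\<exists>N. \<forall>s\<ge>N. f (r s) \<le> f t" by blast
  qed
  then obtain l' where l': "f \<longlonglongrightarrow> l'"
    using decseq_convergent[OF dec] by metis
  then have "(\<lambda>t. f (r t)) \<longlonglongrightarrow> l'" using LIMSEQ_subseq_LIMSEQ[OF l' r] by (simp add: o_def)
  then have "l' = l" using LIMSEQ_unique[OF _ lim] by blast
  with l' show ?thesis by simp
qed

definition kernel_perp :: "real mat \<Rightarrow> real vec set" where
  "kernel_perp A = {w \<in> carrier_vec (dim_col A). \<forall>z \<in> mat_kernel A. w \<bullet> z = 0}"

definition is_kernel_proj :: "real mat \<Rightarrow> real vec \<Rightarrow> real vec \<Rightarrow> bool" where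
  "is_kernel_proj A v p \<longleftrightarrow> p \<in> mat_kernel A \<and> v - p \<in> kernel_perp A"

lemma mat_kernel_diff: "u \<in> mat_kernel A \<Longrightarrow> w \<in> mat_kernel A \<Longrightarrow> u - w \<in> mat_kernel A"
  unfolding mat_kernel_def by (auto simp: mult_minus_distrib_mat_vec[of A "dim_row A" "dim_col A"])

lemma kernel_perp_add: "u \<in> kernel_perp A \<Longrightarrow> w \<in> kernel_perp A \<Longrightarrow> u + w \<in> kernel_perp A"
  unfolding kernel_perp_def mat_kernel_def
  by (auto simp: add_scalar_prod_distrib[of _ "dim_col A"])

lemma kernel_perp_diff: "u \<in> kernel_perp A \<Longrightarrow> w \<in> kernel_perp A \<Longrightarrow> u - w \<in> kernel_perp A"
  unfolding kernel_perp_def mat_kernel_def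
  by (auto simp: minus_scalar_prod_distrib[of _ "dim_col A"])

lemma smult_row_in_kernel_perp: "k < dim_row A \<Longrightarrow> s \<cdot>\<^sub>v row A k \<in> kernel_perp A"
  unfolding kernel_perp_def mat_kernel_def
  by (auto simp: smult_scalar_prod_distrib[of _ "dim_col A"] dest: arg_cong[where f = "\<lambda>v. v $ k"])

lemma kernel_perp_closed:
  assumes "\<forall>t. x t \<in> kernel_perp A" and "L \<in> carrier_vec (dim_col A)" and "tendsto_vec x L"
  shows "L \<in> kernel_perp A"
  unfolding kernel_perp_def
proof (intro CollectI conjI ballI)
  fix z assume z: "z \<in> mat_kernel A"
  have "(\<lambda>t. x t \<bullet> z) \<longlonglongrightarrow> L \<bullet> z"
    using assms z by (intro tendsto_scalar_prod) (auto simp: mat_kernel_def)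
  moreover have "(\<lambda>t. x t \<bullet> z) = (\<lambda>t. 0)" using assms z by (auto simp: kernel_perp_def)
  ultimately show "L \<bullet> z = 0" using LIMSEQ_unique[OF tendsto_const] by metis
qed (rule assms(2))

lemma kernel_perp_inter_mat_kernel: "w \<in> kernel_perp A \<Longrightarrow> w \<in> mat_kernel A \<Longrightarrow> w = 0\<^sub>v (dim_col A)"
  unfolding kernel_perp_def using sqnorm_eq_0_iff by (auto simp: sqnorm_def)

lemma is_kernel_proj_unique:
  assumes p: "is_kernel_proj A v p" and q: "is_kernel_proj A v q"
  shows "p = q"
proof -
  have carrier: "p \<in> carrier_vec (dim_col A)" "q \<in> carrier_vec (dim_col A)"
    using p q by (auto simp: is_kernel_proj_def mat_kernel_def)
  have "p - q = (v - q) - (v - p)" using carrier by (intro eq_vecI) auto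
  then have "p - q \<in> kernel_perp A"
    using p q kernel_perp_diff by (simp add: is_kernel_proj_def)
  moreover have "p - q \<in> mat_kernel A"
    using p q by (intro mat_kernel_diff) (simp_all add: is_kernel_proj_def)
  ultimately have "p - q = 0\<^sub>v (dim_col A)" by (rule kernel_perp_inter_mat_kernel)
  then show ?thesis using carrier diff_eq_0_vec_iff by blast
qed

lemma proj_null_eqI:
  assumes "is_kernel_proj A v p"
  shows "proj_null A v = p"
proof -
  have "is_kernel_proj A v q \<longleftrightarrow> q \<in> carrier_vec (dim_col A) \<and> A *\<^sub>v q = 0\<^sub>v (dim_row A) \<and>
      (\<forall>z \<in> carrier_vec (dim_col A). A *\<^sub>v z = 0\<^sub>v (dim_row A) \<longrightarrow> (v - q) \<bullet> z = 0)" for q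
  proof -
    have "q \<in> carrier_vec (dim_col A) \<Longrightarrow> v - q \<in> carrier_vec (dim_col A)"
      by (intro carrier_vecI) (simp add: carrier_vecD)
    then show ?thesis
      unfolding is_kernel_proj_def kernel_perp_def mat_kernel_def mem_Collect_eq by blast
  qed
  then have "proj_null A v = (THE q. is_kernel_proj A v q)"
    by (simp only: proj_null_def)
  also have "\<dots> = p"
    using assms is_kernel_proj_unique[OF _ assms] by (rule the_equality)
  finally show ?thesis .
qed

lemma is_kernel_proj_diff:
  assumes "v \<in> carrier_vec (dim_col A)" and "w \<in> carrier_vec (dim_col A)"
    and "is_kernel_proj A v p" and "is_kernel_proj A w q"
  shows "is_kernel_proj A (v - w) (p - q)"
proof -
  have "(v - w) - (p - q) = (v - p) - (w - q)"
    using assms by (intro eq_vecI) (auto simp: is_kernel_proj_def mat_kernel_def)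
  then show ?thesis
    using assms mat_kernel_diff kernel_perp_diff by (auto simp: is_kernel_proj_def)
qed

lemma is_ls_sol_iff_solution:
  assumes x: "x \<in> carrier_vec (dim_col A)" and b: "A *\<^sub>v x = b"
  shows "is_ls_sol A b z \<longleftrightarrow> z \<in> carrier_vec (dim_col A) \<and> A *\<^sub>v z = b"
proof -
  have b_carrier: "b \<in> carrier_vec (dim_row A)" using b by (intro carrier_vecI) auto
  have residual_0_iff: "sqnorm (A *\<^sub>v w - b) = 0 \<longleftrightarrow> A *\<^sub>v w = b" for w
  proof -
    have "A *\<^sub>v w \<in> carrier_vec (dim_row A)" "A *\<^sub>v w - b \<in> carrier_vec (dim_row A)"
      using b_carrier by (auto intro!: carrier_vecI simp: carrier_vecD)
    then show ?thesis using sqnorm_eq_0_iff diff_eq_0_vec_iff[OF _ b_carrier] by metis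
  qed
  show ?thesis
  proof
    assume z: "is_ls_sol A b z"
    then have "sqnorm (A *\<^sub>v z - b) \<le> sqnorm (A *\<^sub>v x - b)" using x by (simp add: is_ls_sol_def)
    then have "sqnorm (A *\<^sub>v z - b) = 0"
      using residual_0_iff[of x] b sqnorm_nonneg[of "A *\<^sub>v z - b"] by simp
    then show "z \<in> carrier_vec (dim_col A) \<and> A *\<^sub>v z = b"
      using z residual_0_iff by (simp add: is_ls_sol_def)
  next
    assume "z \<in> carrier_vec (dim_col A) \<and> A *\<^sub>v z = b"
    then show "is_ls_sol A b z"
      using residual_0_iff[of z] sqnorm_nonneg by (simp add: is_ls_sol_def)
  qed
qed

lemma sqnorm_solution_pythagoras:
  assumes x: "x \<in> carrier_vec (dim_col A)" and p: "is_kernel_proj A x p"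
    and z: "z \<in> carrier_vec (dim_col A)" and Az: "A *\<^sub>v z = A *\<^sub>v x"
  shows "sqnorm z = sqnorm (x - p) + sqnorm (z - (x - p))"
proof -
  have p_carrier: "p \<in> carrier_vec (dim_col A)" and Ap: "A *\<^sub>v p = 0\<^sub>v (dim_row A)"
    using p by (auto simp: is_kernel_proj_def mat_kernel_def)
  have "A *\<^sub>v (z - (x - p)) = A *\<^sub>v x - (A *\<^sub>v x - 0\<^sub>v (dim_row A))"
    using x z p_carrier Az Ap
    by (simp add: mult_minus_distrib_mat_vec[of A "dim_row A" "dim_col A"])
  also have "\<dots> = 0\<^sub>v (dim_row A)" by (intro eq_vecI) auto
  finally have "z - (x - p) \<in> mat_kernel A"
    using p_carrier by (auto simp: mat_kernel_def intro!: carrier_vecI)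
  then have "(x - p) \<bullet> (z - (x - p)) = 0" using p by (simp add: is_kernel_proj_def kernel_perp_def)
  moreover have "z = (x - p) + (z - (x - p))" using z p_carrier by (intro eq_vecI) auto
  ultimately show ?thesis
    using sqnorm_add[of "x - p" "dim_col A" "z - (x - p)"] x z p_carrier by simp
qed

lemma mnls_eq:
  assumes x: "x \<in> carrier_vec (dim_col A)" and b: "A *\<^sub>v x = b" and p: "is_kernel_proj A x p"
  shows "mnls A b = x - p"
  unfolding mnls_def is_ls_sol_iff_solution[OF x b]
proof (rule the_equality)
  have p_carrier: "p \<in> carrier_vec (dim_col A)" and Ap: "A *\<^sub>v p = 0\<^sub>v (dim_row A)"
    using p by (auto simp: is_kernel_proj_def mat_kernel_def)
  then have sol: "x - p \<in> carrier_vec (dim_col A) \<and> A *\<^sub>v (x - p) = b"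
    using x b by (auto simp: mult_minus_distrib_mat_vec[of A "dim_row A" "dim_col A"])
  have pythagoras: "sqnorm z = sqnorm (x - p) + sqnorm (z - (x - p))"
    if "z \<in> carrier_vec (dim_col A) \<and> A *\<^sub>v z = b" for z
    using sqnorm_solution_pythagoras[OF x p] that b by simp
  show "(x - p \<in> carrier_vec (dim_col A) \<and> A *\<^sub>v (x - p) = b) \<and>
      (\<forall>z. z \<in> carrier_vec (dim_col A) \<and> A *\<^sub>v z = b \<longrightarrow> sqnorm (x - p) \<le> sqnorm z)"
  proof (intro conjI allI impI)
    fix z assume "z \<in> carrier_vec (dim_col A) \<and> A *\<^sub>v z = b"
    then show "sqnorm (x - p) \<le> sqnorm z"
      using pythagoras[of z] sqnorm_nonneg[of "z - (x - p)"] by simp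
  qed (use sol in auto)
  fix y assume y: "(y \<in> carrier_vec (dim_col A) \<and> A *\<^sub>v y = b) \<and>
    (\<forall>z. z \<in> carrier_vec (dim_col A) \<and> A *\<^sub>v z = b \<longrightarrow> sqnorm y \<le> sqnorm z)"
  then have "sqnorm y \<le> sqnorm (x - p)" using sol by blast
  then have "sqnorm (y - (x - p)) = 0"
    using y pythagoras[of y] sqnorm_nonneg[of "y - (x - p)"] by simp
  moreover have "y - (x - p) \<in> carrier_vec (dim_col A)" using p_carrier by (intro carrier_vecI) auto
  ultimately have "y - (x - p) = 0\<^sub>v (dim_col A)" by (simp add: sqnorm_eq_0_iff)
  then show "y = x - p" using y sol diff_eq_0_vec_iff by blast
qed

lemma foldl_mult_mat_carrier:
  assumes "\<And>k. F k \<in> carrier_mat n n" and "X \<in> carrier_mat n n"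
  shows "foldl (\<lambda>S k. F k * S) X ks \<in> carrier_mat n n"
  using assms(2) by (induction ks arbitrary: X) (auto intro: mult_carrier_mat[OF assms(1)])

lemma foldl_mult_mat_eq_mult:
  fixes F :: "nat \<Rightarrow> 'a :: semiring_1 mat"
  assumes F: "\<And>k. F k \<in> carrier_mat n n" and "X \<in> carrier_mat n n"
  shows "foldl (\<lambda>S k. F k * S) X ks = foldl (\<lambda>S k. F k * S) (1\<^sub>m n) ks * X"
  using assms(2)
proof (induction ks arbitrary: X)
  case (Cons k ks)
  let ?G = "foldl (\<lambda>S k. F k * S) (1\<^sub>m n) ks"
  have G: "?G \<in> carrier_mat n n" by (rule foldl_mult_mat_carrier[OF F one_carrier_mat])
  have "foldl (\<lambda>S k. F k * S) X (k # ks) = ?G * (F k * X)"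
    using Cons.IH[OF mult_carrier_mat[OF F Cons.prems]] by simp
  also have "\<dots> = ?G * F k * X"
    using G F[of k] Cons.prems by (simp add: assoc_mult_mat[of _ n n _ n _ n])
  also have "?G * F k = foldl (\<lambda>S k. F k * S) (1\<^sub>m n) (k # ks)"
    using Cons.IH[OF F[of k]] right_mult_one_mat[OF F[of k]] by simp
  finally show ?case .
qed simp

locale kaczmarz =
  fixes A :: "real mat" and m n :: nat and mu :: "nat \<Rightarrow> real"
  assumes A_carrier: "A \<in> carrier_mat m n"
    and rows_nonzero: "\<forall>i<m. row A i \<noteq> 0\<^sub>v n"
    and mu_range: "\<forall>i<m. 0 < mu i \<and> mu i < 2"
begin

lemma dim_A [simp]: "dim_row A = m" "dim_col A = n"
  using A_carrier by auto

lemma row_A_carrier [simp]: "row A k \<in> carrier_vec n"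
  by (simp add: row_def)

lemma sqnorm_row_pos: "k < m \<Longrightarrow> 0 < sqnorm (row A k)"
  using rows_nonzero sqnorm_eq_0_iff[OF row_A_carrier] sqnorm_nonneg[of "row A k"] by force

lemma row_scalar_prod_kernel: "z \<in> mat_kernel A \<Longrightarrow> k < m \<Longrightarrow> row A k \<bullet> z = 0"
  unfolding mat_kernel_def by (auto dest: arg_cong[where f = "\<lambda>v. v $ k"])

abbreviation P :: "nat \<Rightarrow> real mat" where
  "P \<equiv> Pk A mu"

lemma Pk_carrier [simp]: "P k \<in> carrier_mat n n"
  unfolding Pk_def by auto

lemma dim_Pk [simp]: "dim_row (P k) = n" "dim_col (P k) = n"
  by (simp_all add: Pk_def)

lemma Pk_mult_vec_carrier [simp]: "v \<in> carrier_vec n \<Longrightarrow> P k *\<^sub>v v \<in> carrier_vec n"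
  by (rule mult_mat_vec_carrier[OF Pk_carrier])

lemma Pk_mult_vec:
  assumes v: "v \<in> carrier_vec n"
  shows "P k *\<^sub>v v = v - (mu k * (row A k \<bullet> v) / sqnorm (row A k)) \<cdot>\<^sub>v row A k"
proof (rule eq_vecI)
  fix i assume "i < dim_vec (v - (mu k * (row A k \<bullet> v) / sqnorm (row A k)) \<cdot>\<^sub>v row A k)"
  then have i: "i < n" by simp
  have "row (P k) i \<bullet> v = v $ i - mu k * (row A k \<bullet> v) / sqnorm (row A k) * row A k $ i"
    using i v unfolding Pk_def scalar_prod_as_sum
    by (simp add: sum_subtractf sum_distrib_left sum_divide_distrib algebra_simps
        if_distrib[of "\<lambda>x. _ * x"]
        cong: if_cong)
  then show "(P k *\<^sub>v v) $ i = (v - (mu k * (row A k \<bullet> v) / sqnorm (row A k)) \<cdot>\<^sub>v row A k) $ i"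
    using i v by simp
qed (use v in simp)

lemma sqnorm_Pk_mult_vec:
  assumes v: "v \<in> carrier_vec n" and k: "k < m"
  shows "sqnorm (P k *\<^sub>v v) = sqnorm v - mu k * (2 - mu k) * (row A k \<bullet> v)\<^sup>2 / sqnorm (row A k)"
  unfolding Pk_mult_vec[OF v] sqnorm_diff_smult[OF v row_A_carrier]
  using sqnorm_row_pos[OF k] by (simp add: field_simps power2_eq_square)

lemma sqnorm_Pk_mult_vec_le:
  assumes v: "v \<in> carrier_vec n" and k: "k < m"
  shows "sqnorm (P k *\<^sub>v v) \<le> sqnorm v"
proof -
  have "0 \<le> mu k * (2 - mu k) * (row A k \<bullet> v)\<^sup>2 / sqnorm (row A k)"
    using mu_range sqnorm_row_pos[OF k] k by (intro divide_nonneg_pos mult_nonneg_nonneg) auto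
  then show ?thesis by (simp add: sqnorm_Pk_mult_vec[OF v k])
qed

lemma sqnorm_Pk_mult_vec_eq_iff:
  assumes v: "v \<in> carrier_vec n" and k: "k < m"
  shows "sqnorm (P k *\<^sub>v v) = sqnorm v \<longleftrightarrow> row A k \<bullet> v = 0"
  using mu_range[rule_format, OF k] sqnorm_row_pos[OF k] by (simp add: sqnorm_Pk_mult_vec[OF v k])

lemma Pk_mult_vec_orth: "v \<in> carrier_vec n \<Longrightarrow> row A k \<bullet> v = 0 \<Longrightarrow> P k *\<^sub>v v = v"
  by (intro eq_vecI) (auto simp: Pk_mult_vec)

lemma Pk_mult_kernel: "z \<in> mat_kernel A \<Longrightarrow> k < m \<Longrightarrow> P k *\<^sub>v z = z"
  using Pk_mult_vec_orth row_scalar_prod_kernel by (simp add: mat_kernel_def)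

lemma Pk_mult_vec_diff_in_kernel_perp:
  assumes v: "v \<in> carrier_vec n" and k: "k < m"
  shows "v - P k *\<^sub>v v \<in> kernel_perp A"
proof -
  have "v - P k *\<^sub>v v = (mu k * (row A k \<bullet> v) / sqnorm (row A k)) \<cdot>\<^sub>v row A k"
    unfolding Pk_mult_vec[OF v] using v by (intro eq_vecI) auto
  then show ?thesis using smult_row_in_kernel_perp[of k A] k by simp
qed

text \<open>\<open>sweep j = P (m - 1) * ... * P j\<close>; thus \<open>sweep 0\<close> is the full sweep \<open>S\<close>.\<close>

definition sweep :: "nat \<Rightarrow> real mat" where
  "sweep j = foldl (\<lambda>S k. P k * S) (1\<^sub>m n) [j..<m]"

lemma sweep_carrier [simp]: "sweep j \<in> carrier_mat n n"
  unfolding sweep_def by (intro foldl_mult_mat_carrier) auto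

lemma dim_sweep [simp]: "dim_row (sweep j) = n" "dim_col (sweep j) = n"
  using carrier_matD[OF sweep_carrier[of j]] by simp_all

lemma sweep_mult_vec_carrier [simp]: "v \<in> carrier_vec n \<Longrightarrow> sweep j *\<^sub>v v \<in> carrier_vec n"
  by (rule mult_mat_vec_carrier[OF sweep_carrier])

lemma sweep_last: "sweep m = 1\<^sub>m n"
  unfolding sweep_def by simp

lemma Qj_eq_sweep: "Qj A mu j = sweep (Suc j)"
  unfolding Qj_def sweep_def by simp

lemma sweep_mult_vec_step:
  assumes j: "j < m" and v: "v \<in> carrier_vec n"
  shows "sweep j *\<^sub>v v = sweep (Suc j) *\<^sub>v (P j *\<^sub>v v)"
proof -
  have "sweep j = sweep (Suc j) * P j"
    using j foldl_mult_mat_eq_mult[of P n "P j * 1\<^sub>m n" "[Suc j..<m]"]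
    by (simp add: sweep_def upt_conv_Cons)
  then show ?thesis using v by (simp add: assoc_mult_mat_vec[of _ n n _ n])
qed

lemma sweep_mult_kernel:
  assumes z: "z \<in> mat_kernel A" and "j \<le> m"
  shows "sweep j *\<^sub>v z = z"
  using \<open>j \<le> m\<close>
proof (induction j rule: inc_induct)
  case base
  show ?case using z by (simp add: sweep_last mat_kernel_def)
next
  case (step j)
  then show ?case using z by (simp add: sweep_mult_vec_step Pk_mult_kernel mat_kernel_def)
qed

lemma sqnorm_sweep_le:
  assumes "v \<in> carrier_vec n" and "j \<le> m"
  shows "sqnorm (sweep j *\<^sub>v v) \<le> sqnorm v"
  using assms(2,1)
proof (induction j arbitrary: v rule: inc_induct)
  case base
  then show ?case by (simp add: sweep_last)
next
  case (step j)
  have "sqnorm (sweep (Suc j) *\<^sub>v (P j *\<^sub>v v)) \<le> sqnorm (P j *\<^sub>v v)"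
    using step.IH step.prems by simp
  also have "\<dots> \<le> sqnorm v" by (rule sqnorm_Pk_mult_vec_le[OF step.prems step.hyps(2)])
  finally show ?case using step by (simp add: sweep_mult_vec_step)
qed

lemma row_orth_if_sqnorm_sweep_eq:
  assumes "v \<in> carrier_vec n" and "j \<le> m" and "sqnorm (sweep j *\<^sub>v v) = sqnorm v"
    and "j \<le> k" and "k < m"
  shows "row A k \<bullet> v = 0"
  using assms(2,1,3-5)
proof (induction j arbitrary: v rule: inc_induct)
  case (step j)
  have "sqnorm v = sqnorm (sweep (Suc j) *\<^sub>v (P j *\<^sub>v v))"
    using step by (simp add: sweep_mult_vec_step)
  also have "\<dots> \<le> sqnorm (P j *\<^sub>v v)"
    using step.prems(1) step.hyps by (intro sqnorm_sweep_le) auto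
  finally have "sqnorm (P j *\<^sub>v v) = sqnorm v"
    using sqnorm_Pk_mult_vec_le[OF step.prems(1) step.hyps(2)] by simp
  then have row_j: "row A j \<bullet> v = 0"
    using sqnorm_Pk_mult_vec_eq_iff[OF step.prems(1) step.hyps(2)] by simp
  show ?case
  proof (cases "k = j")
    case False
    then show ?thesis
      using step.IH[of v] step.prems step.hyps Pk_mult_vec_orth[OF step.prems(1) row_j]
      by (simp add: sweep_mult_vec_step)
  qed (use row_j in simp)
qed simp

lemma mat_kernel_if_sqnorm_sweep_eq:
  assumes v: "v \<in> carrier_vec n" and eq: "sqnorm (sweep 0 *\<^sub>v v) = sqnorm v"
  shows "v \<in> mat_kernel A"
proof -
  have "A *\<^sub>v v = 0\<^sub>v m"
    using row_orth_if_sqnorm_sweep_eq[OF v _ eq] by (intro eq_vecI) auto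
  then show ?thesis using v by (simp add: mat_kernel_def)
qed

lemma sweep_mult_vec_diff_in_kernel_perp:
  assumes "v \<in> carrier_vec n" and "j \<le> m"
  shows "v - sweep j *\<^sub>v v \<in> kernel_perp A"
  using assms(2,1)
proof (induction j arbitrary: v rule: inc_induct)
  case base
  have "v - sweep m *\<^sub>v v = 0\<^sub>v n" using base by (intro eq_vecI) (auto simp: sweep_last)
  then show ?case by (auto simp: kernel_perp_def mat_kernel_def)
next
  case (step j)
  let ?u = "P j *\<^sub>v v"
  have "v - sweep j *\<^sub>v v = (v - ?u) + (?u - sweep (Suc j) *\<^sub>v ?u)"
    using step by (intro eq_vecI) (auto simp: sweep_mult_vec_step)
  then show ?case
    using step Pk_mult_vec_diff_in_kernel_perp by (auto intro!: kernel_perp_add)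
qed

lemma sweep_mult_vec_telescope:
  assumes "v \<in> carrier_vec n" and "i < n" and "j \<le> m"
  shows "(sweep j *\<^sub>v v) $ i = v $ i -
    (\<Sum>k\<in>{j..<m}. mu k * (row A k \<bullet> v) / sqnorm (row A k) * (sweep (Suc k) *\<^sub>v row A k) $ i)"
  using assms(3,1)
proof (induction j arbitrary: v rule: inc_induct)
  case base
  then show ?case using assms(2) by (simp add: sweep_last)
next
  case (step j)
  have "(sweep j *\<^sub>v v) $ i = (sweep (Suc j) *\<^sub>v v) $ i
      - mu j * (row A j \<bullet> v) / sqnorm (row A j) * (sweep (Suc j) *\<^sub>v row A j) $ i"
    using step.hyps step.prems assms(2)
    by (simp add: sweep_mult_vec_step Pk_mult_vec mult_minus_distrib_mat_vec[of _ n n]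
        mult_mat_vec[of _ n n])
  then show ?case
    using step assms(2) by (simp add: sum.atLeast_Suc_lessThan)
qed

definition iteration_matrix :: "real mat \<Rightarrow> real mat" where
  "iteration_matrix C =
    transpose_mat A * transpose_mat C * mat_diag m mu * mat_diag m (\<lambda>k. 1 / sqnorm (row A k))"

lemma dim_iteration_matrix [simp]:
  "dim_row (iteration_matrix C) = n" "dim_col (iteration_matrix C) = m"
  by (simp_all add: iteration_matrix_def mat_diag_def)

lemma iteration_matrix_entry:
  assumes C: "C \<in> carrier_mat m m" and CA: "AS A mu = C * A" and i: "i < n" and j: "j < m"
  shows "iteration_matrix C $$ (i, j) = mu j / sqnorm (row A j) * (sweep (Suc j) *\<^sub>v row A j) $ i"
proof -
  have "transpose_mat A * transpose_mat C = transpose_mat (AS A mu)"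
    using transpose_mult[OF C A_carrier] CA by simp
  moreover have "transpose_mat (AS A mu) \<in> carrier_mat n m" by (simp add: AS_def)
  ultimately show ?thesis
    using i j by (simp add: iteration_matrix_def mat_diag_mult_right[of _ n m] AS_def Qj_eq_sweep)
qed

lemma iteration_matrix_mult_A:
  assumes C: "C \<in> carrier_mat m m" and CA: "AS A mu = C * A" and u: "u \<in> carrier_vec n"
  shows "iteration_matrix C *\<^sub>v (A *\<^sub>v u) = u - sweep 0 *\<^sub>v u"
proof (rule eq_vecI)
  fix i assume "i < dim_vec (u - sweep 0 *\<^sub>v u)"
  then have i: "i < n" using u by simp
  have "(iteration_matrix C *\<^sub>v (A *\<^sub>v u)) $ i
      = (\<Sum>j<m. iteration_matrix C $$ (i, j) * (row A j \<bullet> u))"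
    using i scalar_prod_as_sum[of "row (iteration_matrix C) i" "A *\<^sub>v u"] by simp
  also have "\<dots> = (\<Sum>k\<in>{0..<m}.
      mu k * (row A k \<bullet> u) / sqnorm (row A k) * (sweep (Suc k) *\<^sub>v row A k) $ i)"
    unfolding atLeast0LessThan using iteration_matrix_entry[OF C CA i] by (intro sum.cong) auto
  also have "\<dots> = (u - sweep 0 *\<^sub>v u) $ i"
    using sweep_mult_vec_telescope[OF u i, of 0] i u by simp
  finally show "(iteration_matrix C *\<^sub>v (A *\<^sub>v u)) $ i = (u - sweep 0 *\<^sub>v u) $ i" .
qed (use u in simp)

lemma kaczmarz_update_error:
  assumes C: "C \<in> carrier_mat m m" and CA: "AS A mu = C * A"
    and x: "x \<in> carrier_vec n" and b: "A *\<^sub>v x = b" and v: "v \<in> carrier_vec n"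
  shows "v + iteration_matrix C *\<^sub>v (b - A *\<^sub>v v) - x = sweep 0 *\<^sub>v (v - x)"
proof -
  have "b - A *\<^sub>v v = A *\<^sub>v (x - v)"
    using x v b by (simp add: mult_minus_distrib_mat_vec[OF A_carrier])
  moreover have "sweep 0 *\<^sub>v (x - v) = - (sweep 0 *\<^sub>v (v - x))"
    using x v by (intro eq_vecI) (auto simp: mult_minus_distrib_mat_vec[of _ n n])
  ultimately show ?thesis
    using iteration_matrix_mult_A[OF C CA, of "x - v"] x v by (intro eq_vecI) auto
qed

lemma sweep_orbit_subseq_tendsto_kernel:
  assumes x: "\<forall>t. x t \<in> carrier_vec n" and step: "\<forall>t. x (Suc t) = sweep 0 *\<^sub>v x t"
  shows "\<exists>r L. strict_mono r \<and> L \<in> mat_kernel A \<and> tendsto_vec (\<lambda>t. x (r t)) L"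
proof -
  have dec: "decseq (\<lambda>t. sqnorm (x t))"
    using x step sqnorm_sweep_le by (intro decseq_SucI) simp
  have bound: "\<forall>t i. i < n \<longrightarrow> \<bar>x t $ i\<bar> \<le> sqrt (sqnorm (x 0))"
  proof (intro allI impI)
    fix t i assume "i < n"
    then have "\<bar>x t $ i\<bar> \<le> sqrt (sqnorm (x t))"
      using abs_vec_index_le_sqrt_sqnorm[of i "x t"] carrier_vecD[OF x[rule_format]] by simp
    also have "\<dots> \<le> sqrt (sqnorm (x 0))" using decseqD[OF dec, of 0 t] by simp
    finally show "\<bar>x t $ i\<bar> \<le> sqrt (sqnorm (x 0))" .
  qed
  obtain r L where r: "strict_mono r" and L: "L \<in> carrier_vec n"
    and lim: "tendsto_vec (\<lambda>t. x (r t)) L"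
    using bounded_vec_seq_has_convergent_subseq[OF bound] by blast
  obtain l where l: "(\<lambda>t. sqnorm (x t)) \<longlonglongrightarrow> l"
    using decseq_convergent[OF dec] sqnorm_nonneg by metis
  have "(\<lambda>t. sqnorm (x (r t))) \<longlonglongrightarrow> sqnorm L"
    using x L lim by (intro tendsto_sqnorm) auto
  moreover have "(\<lambda>t. sqnorm (x (r t))) \<longlonglongrightarrow> l"
    using LIMSEQ_subseq_LIMSEQ[OF l r] by (simp add: o_def)
  ultimately have l_eq: "l = sqnorm L" using LIMSEQ_unique by blast
  have "tendsto_vec (\<lambda>t. x (Suc (r t))) (sweep 0 *\<^sub>v L)"
    using tendsto_vec_mult_mat_vec[OF sweep_carrier _ L lim] x step by simp
  then have "(\<lambda>t. sqnorm (x (Suc (r t)))) \<longlonglongrightarrow> sqnorm (sweep 0 *\<^sub>v L)"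
    using x L by (intro tendsto_sqnorm) auto
  moreover have "(\<lambda>t. sqnorm (x (Suc (r t)))) \<longlonglongrightarrow> l"
    using LIMSEQ_subseq_LIMSEQ[OF LIMSEQ_Suc[OF l] r] by (simp add: o_def)
  ultimately have "sqnorm (sweep 0 *\<^sub>v L) = sqnorm L" using l_eq LIMSEQ_unique by blast
  then have "L \<in> mat_kernel A" by (rule mat_kernel_if_sqnorm_sweep_eq[OF L])
  then show ?thesis using r lim by blast
qed

lemma sweep_orbit_diff_in_kernel_perp:
  assumes x: "\<forall>t. x t \<in> carrier_vec n" and step: "\<forall>t. x (Suc t) = sweep 0 *\<^sub>v x t"
  shows "x 0 - x t \<in> kernel_perp A"
proof (induction t)
  case 0
  have "x 0 - x 0 = 0\<^sub>v n" using x by simp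
  then show ?case by (auto simp: kernel_perp_def mat_kernel_def)
next
  case (Suc t)
  have "x 0 - x (Suc t) = (x 0 - x t) + (x t - sweep 0 *\<^sub>v x t)"
    using carrier_vecD[OF x[rule_format]] step by (intro eq_vecI) auto
  then show ?case
    using Suc x sweep_mult_vec_diff_in_kernel_perp[of "x t" 0] by (simp add: kernel_perp_add)
qed

lemma sweep_orbit_dist_kernel_decseq:
  assumes x: "\<forall>t. x t \<in> carrier_vec n" and step: "\<forall>t. x (Suc t) = sweep 0 *\<^sub>v x t"
    and L: "L \<in> mat_kernel A"
  shows "decseq (\<lambda>t. sqnorm (x t - L))"
proof (rule decseq_SucI)
  fix t
  have L_carrier: "L \<in> carrier_vec n" using L by (simp add: mat_kernel_def)
  then have "x (Suc t) - L = sweep 0 *\<^sub>v (x t - L)"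
    using x step sweep_mult_kernel[OF L, of 0] by (simp add: mult_minus_distrib_mat_vec[of _ n n])
  then show "sqnorm (x (Suc t) - L) \<le> sqnorm (x t - L)"
    using x L_carrier by (simp add: sqnorm_sweep_le)
qed

lemma sweep_orbit_tendsto_kernel_proj:
  assumes x: "\<forall>t. x t \<in> carrier_vec n" and step: "\<forall>t. x (Suc t) = sweep 0 *\<^sub>v x t"
  shows "\<exists>L. is_kernel_proj A (x 0) L \<and> tendsto_vec x L"
proof -
  obtain r L where r: "strict_mono r" and L: "L \<in> mat_kernel A"
    and lim: "tendsto_vec (\<lambda>t. x (r t)) L"
    using sweep_orbit_subseq_tendsto_kernel[OF x step] by blast
  have L_carrier: "L \<in> carrier_vec n" using L by (simp add: mat_kernel_def)
  have "tendsto_vec (\<lambda>t. x 0 - x (r t)) (x 0 - L)"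
    using x L_carrier by (intro tendsto_vec_diff[OF tendsto_vec_const lim]) auto
  then have "x 0 - L \<in> kernel_perp A"
    using sweep_orbit_diff_in_kernel_perp[OF x step] L_carrier
    by (intro kernel_perp_closed[of "\<lambda>t. x 0 - x (r t)"]) (auto intro!: carrier_vecI)
  with L have proj: "is_kernel_proj A (x 0) L" by (simp add: is_kernel_proj_def)
  have "tendsto_vec (\<lambda>t. x (r t) - L) (L - L)"
    using x L_carrier by (intro tendsto_vec_diff[OF lim tendsto_vec_const]) auto
  then have "(\<lambda>t. sqnorm (x (r t) - L)) \<longlonglongrightarrow> sqnorm (L - L)"
    using x L_carrier by (intro tendsto_sqnorm[where n = n]) auto
  then have "(\<lambda>t. sqnorm (x (r t) - L)) \<longlonglongrightarrow> 0"
    using L_carrier by (simp add: sqnorm_def)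
  then have "(\<lambda>t. sqnorm (x t - L)) \<longlonglongrightarrow> 0"
    by (rule decseq_tendsto_if_subseq_tendsto[OF sweep_orbit_dist_kernel_decseq[OF x step L] r])
  then show ?thesis using proj L_carrier tendsto_vec_if_sqnorm_diff_tendsto_0 by blast
qed

text \<open>The orthogonal projection onto the kernel exists because the sweep iterates converge to it.\<close>

lemma is_kernel_proj_proj_null:
  assumes v: "v \<in> carrier_vec n"
  shows "is_kernel_proj A v (proj_null A v)"
proof -
  define x where "x t = ((\<lambda>u. sweep 0 *\<^sub>v u) ^^ t) v" for t
  have step: "\<forall>t. x (Suc t) = sweep 0 *\<^sub>v x t" by (simp add: x_def)
  have "x t \<in> carrier_vec n" for t by (induction t) (use v step x_def in auto)
  with step obtain L where "is_kernel_proj A (x 0) L"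
    using sweep_orbit_tendsto_kernel_proj by blast
  then show ?thesis using proj_null_eqI by (simp add: x_def)
qed

lemma proj_null_carrier: "v \<in> carrier_vec n \<Longrightarrow> proj_null A v \<in> carrier_vec n"
  using is_kernel_proj_proj_null by (simp add: is_kernel_proj_def mat_kernel_def)

lemma proj_null_diff:
  assumes "v \<in> carrier_vec n" and "w \<in> carrier_vec n"
  shows "proj_null A (v - w) = proj_null A v - proj_null A w"
  using assms by (intro proj_null_eqI is_kernel_proj_diff is_kernel_proj_proj_null) simp_all

end

theorem theorem3p12:
  fixes A :: "real mat" and b y0 :: "real vec" and mu :: "nat \<Rightarrow> real"
    and C :: "real mat" and y :: "nat \<Rightarrow> real vec" and m n :: nat
  assumes A: "A \<in> carrier_mat m n"
    and nozero: "\<forall>i<m. row A i \<noteq> 0\<^sub>v n"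
    and b: "b \<in> carrier_vec m"
    and consistent: "\<exists>x \<in> carrier_vec n. A *\<^sub>v x = b"
    and mu: "\<forall>i<m. 0 < mu i \<and> mu i < 2"
    and C: "unit_upper_triangular m C"
    and CA: "AS A mu = C * A"
    and y0: "y0 \<in> carrier_vec n"
    and y_0: "y 0 = y0"
    and y_step: "\<forall>k. y (Suc k) = y k + (transpose_mat A * transpose_mat C * mat_diag m mu
                     * mat_diag m (\<lambda>i. 1 / sqnorm (row A i))) *\<^sub>v (b - A *\<^sub>v y k)"
  shows "\<forall>i<n. (\<lambda>k. y k $ i) \<longlonglongrightarrow> (mnls A b + proj_null A y0) $ i"
proof -
  interpret kaczmarz A m n mu using A nozero mu by unfold_locales
  obtain x where x: "x \<in> carrier_vec n" and Ax: "A *\<^sub>v x = b" using consistent by blast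
  have C_carrier: "C \<in> carrier_mat m m" using C by (simp add: unit_upper_triangular_def)
  have y: "y k \<in> carrier_vec n" for k
    by (cases k) (auto simp: y_0 y0 y_step intro!: carrier_vecI)
  define e where "e k = y k - x" for k
  have "e (Suc k) = sweep 0 *\<^sub>v e k" for k
    using kaczmarz_update_error[OF C_carrier CA x Ax y] y_step[folded iteration_matrix_def]
    by (simp add: e_def)
  moreover have e: "e k \<in> carrier_vec n" for k using x y[of k] by (simp add: e_def)
  ultimately obtain L where L: "is_kernel_proj A (y0 - x) L" and lim: "tendsto_vec e L"
    using sweep_orbit_tendsto_kernel_proj[of e] y_0 by (auto simp: e_def)
  have "L = proj_null A y0 - proj_null A x"
    using proj_null_eqI[OF L] proj_null_diff[OF y0 x] by simp
  moreover have "mnls A b = x - proj_null A x"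
    using mnls_eq[OF _ Ax is_kernel_proj_proj_null[OF x]] x by simp
  ultimately have limit: "x + L = mnls A b + proj_null A y0"
    using x y0 carrier_vecD[OF proj_null_carrier[OF x]] carrier_vecD[OF proj_null_carrier[OF y0]]
    by (intro eq_vecI) auto
  have "tendsto_vec (\<lambda>k. x + e k) (x + L)"
    using x e L by (intro tendsto_vec_add[OF tendsto_vec_const lim])
      (auto simp: is_kernel_proj_def mat_kernel_def)
  moreover have "x + e k = y k" for k using x y[of k] by (intro eq_vecI) (auto simp: e_def)
  ultimately show ?thesis
    using carrier_vecD[OF proj_null_carrier[OF y0]] unfolding limit tendsto_vec_def by simp
qed

end
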